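(* Let $\mathcal{A}=\{1,\dots,K\}$ with $K\ge2$, $a^*\in\mathcal{A}$, $\sigma>0$, $\delta>0$, and for each $a\in\mathcal{A}$ let $m_a\ge1$ and $\vec{y}_a\in\mathbb{R}^{m_a}$. For $\{\vec{\epsilon}_a\}_{a\in\mathcal{A}}$ with $\vec{\epsilon}_a\in\mathbb{R}^{m_a}$ let $\tilde{\mu}_a=(\vec{y}_a+\vec{\epsilon}_a)^T\mathbf{1}/m_a$. Then the set of all $\{\vec{\epsilon}_a\}_{a\in\mathcal{A}}$ satisfying $$\sum_{a\neq a^*}\Phi\!\left(\frac{\tilde{\mu}_a-\tilde{\mu}_{a^*}}{\sigma^3\sqrt{1/m_a+1/m_{a^*}}}\right)\le\delta\quad\text{and}\quad \tilde{\mu}_a-\tilde{\mu}_{a^*}\le0\ \ \forall a\neq a^*$$ is convex.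
   Context: $\Phi$ denotes the standard normal cumulative distribution function and $\mathbf{1}$ the all-ones vector. Here $\vec{y}_a$ are the rewards collected from arm $a$ in an offline batch and $\vec{\epsilon}_a$ is the attacker's additive poisoning of them, so $\tilde{\mu}_a$ is the post-attack empirical mean. *)

theory Defs
  imports "HOL-Probability.Probability"
begin

definition Phi :: "real \<Rightarrow> real" where
  "Phi x = measure (density lborel std_normal_density) {..x}"

definition mu_tilde :: "(nat \<Rightarrow> nat) \<Rightarrow> (nat \<Rightarrow> nat \<Rightarrow> real) \<Rightarrow> (nat \<Rightarrow> nat \<Rightarrow> real) \<Rightarrow> nat \<Rightarrow> real" where
  "mu_tilde m y e a = (\<Sum>i<m a. y a i + e a i) / real (m a)"

text \<open>A family {e_a} with e_a in R^(m a), a in {1..K}, represented extensionally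
  (zero outside the valid index range).\<close>
definition attack_space :: "nat \<Rightarrow> (nat \<Rightarrow> nat) \<Rightarrow> (nat \<Rightarrow> nat \<Rightarrow> real) set" where
  "attack_space K m = {e. \<forall>a i. (a \<notin> {1..K} \<or> i \<ge> m a) \<longrightarrow> e a i = 0}"

text \<open>Convexity of a set of families (pointwise convex combinations), i.e. the
  unfolding of the library notion convex for this function space.\<close>
definition convex_fam :: "(nat \<Rightarrow> nat \<Rightarrow> real) set \<Rightarrow> bool" where
  "convex_fam S \<longleftrightarrow> (\<forall>x\<in>S. \<forall>y\<in>S. \<forall>u\<ge>0. \<forall>v\<ge>0. u + v = 1 \<longrightarrow>
      (\<lambda>a i. u * x a i + v * y a i) \<in> S)"

end

theory Submission
  imports Defs
begin

text \<open>On the half-line \<open>{..0}\<close> the standard normal density is increasing, so \<open>Phi\<close> is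
  convex there. Each argument of \<open>Phi\<close> is an affine function of the attack that the sign
  constraints force into \<open>{..0}\<close>, so the sum is a convex function on the convex set cut out
  by these constraints, and its sublevel sets within that set are convex.\<close>

lemma Phi_eq_add_integral:
  assumes "x \<le> y"
  shows "Phi y = Phi x + integral {x..y} std_normal_density"
proof -
  have integrable: "set_integrable lborel A std_normal_density" if "A \<in> sets borel" for A
    unfolding set_integrable_def using that by (intro integrable_mult_indicator) auto
  have Phi_set_integral: "Phi z = (LINT t:{..z}|lborel. std_normal_density t)" for z
  proof -
    have "Phi z = integral\<^sup>L (density lborel std_normal_density) (indicator {..z})"
      unfolding Phi_def by simp
    also have "\<dots> = (LINT t|lborel. std_normal_density t *\<^sub>R indicator {..z} t)"
      by (rule integral_density) auto
    finally show ?thesis by (simp add: set_lebesgue_integral_def mult.commute)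
  qed
  have split: "{..y} = {..x} \<union> {x<..y}" using assms by auto
  have "Phi y = Phi x + (LINT t:{x<..y}|lborel. std_normal_density t)"
    unfolding Phi_set_integral split by (rule set_integral_Un) (auto intro: integrable)
  also have "(LINT t:{x<..y}|lborel. std_normal_density t) = integral {x<..y} std_normal_density"
    by (simp add: set_borel_integral_eq_integral(2) integrable)
  also have "\<dots> = integral {x..y} std_normal_density"
    by (rule integral_spike_set [OF empty_imp_negligible negligible_subset [OF negligible_sing [of x]]])
      auto
  finally show ?thesis .
qed

lemma has_real_derivative_Phi: "(Phi has_real_derivative std_normal_density x) (at x)"
proof -
  let ?F = "\<lambda>t. Phi (x - 1) + integral {x - 1..t} std_normal_density"
  have "continuous_on {x - 1..x + 1} std_normal_density"
    unfolding normal_density_def by (intro continuous_intros) auto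
  then have "((\<lambda>t. integral {x - 1..t} std_normal_density) has_real_derivative std_normal_density x)
      (at x within {x - 1<..<x + 1})"
    by (rule has_field_derivative_subset [OF integral_has_real_derivative]) auto
  then have "(?F has_real_derivative std_normal_density x) (at x)"
    using at_within_open [of x "{x - 1<..<x + 1}"]
    by (auto intro!: derivative_eq_intros)
  then show ?thesis
    by (rule has_field_derivative_transform_within_open [where S = "{x - 1<..<x + 1}"])
      (auto intro!: Phi_eq_add_integral [symmetric])
qed

lemma convex_on_Phi_nonpos: "convex_on {..0} Phi"
proof (rule convex_on_realI [OF _ has_real_derivative_Phi])
  fix x y :: real
  assume "x \<in> {..0}" "y \<in> {..0}" "x \<le> y"
  then have "(- y) * (- y) \<le> (- x) * (- x)"
    by (intro mult_mono) auto
  then have "y\<^sup>2 \<le> x\<^sup>2"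
    by (simp add: power2_eq_square)
  then show "std_normal_density x \<le> std_normal_density y"
    unfolding std_normal_density_def by (intro mult_left_mono) auto
qed simp

lemma convex_fam_sublevel_sum_nonpos:
  fixes f :: "real \<Rightarrow> real" and A :: "'i set"
    and D :: "'i \<Rightarrow> (nat \<Rightarrow> nat \<Rightarrow> real) \<Rightarrow> real" and c :: "'i \<Rightarrow> real"
  assumes "convex_fam S" and "convex_on {..0} f" and "\<And>a. a \<in> A \<Longrightarrow> c a > 0"
    and D_affine: "\<And>a x z u v. a \<in> A \<Longrightarrow> u + v = 1 \<Longrightarrow>
      D a (\<lambda>b i. u * x b i + v * z b i) = u * D a x + v * D a z"
  shows "convex_fam {e \<in> S. (\<Sum>a\<in>A. f (D a e / c a)) \<le> \<delta> \<and> (\<forall>a\<in>A. D a e \<le> 0)}"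
  unfolding convex_fam_def
proof (intro ballI allI impI)
  fix x z and u v :: real
  assume x: "x \<in> {e \<in> S. (\<Sum>a\<in>A. f (D a e / c a)) \<le> \<delta> \<and> (\<forall>a\<in>A. D a e \<le> 0)}"
    and z: "z \<in> {e \<in> S. (\<Sum>a\<in>A. f (D a e / c a)) \<le> \<delta> \<and> (\<forall>a\<in>A. D a e \<le> 0)}"
    and "u \<ge> 0" "v \<ge> 0" "u + v = 1"
  define w where "w = (\<lambda>b i. u * x b i + v * z b i)"
  have D_w: "D a w / c a = u * (D a x / c a) + v * (D a z / c a)" if "a \<in> A" for a
    using D_affine [OF that \<open>u + v = 1\<close>] by (simp add: w_def add_divide_distrib)
  have f_w: "f (D a w / c a) \<le> u * f (D a x / c a) + v * f (D a z / c a)" if "a \<in> A" for a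
  proof -
    have "D a x / c a \<le> 0" "D a z / c a \<le> 0"
      using x z \<open>a \<in> A\<close> assms(3) [OF \<open>a \<in> A\<close>] by (auto simp: divide_nonpos_pos)
    then show ?thesis
      using convex_onD [OF assms(2), of v "D a x / c a" "D a z / c a"] \<open>u + v = 1\<close> \<open>u \<ge> 0\<close> \<open>v \<ge> 0\<close>
      by (simp add: D_w [OF that] eq_diff_eq [symmetric])
  qed
  have "(\<Sum>a\<in>A. f (D a w / c a))
      \<le> u * (\<Sum>a\<in>A. f (D a x / c a)) + v * (\<Sum>a\<in>A. f (D a z / c a))"
    using sum_mono [OF f_w] by (simp add: sum.distrib sum_distrib_left)
  also have "\<dots> \<le> u * \<delta> + v * \<delta>"
    using x z \<open>u \<ge> 0\<close> \<open>v \<ge> 0\<close> by (intro add_mono mult_left_mono) auto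
  also have "\<dots> = \<delta>"
    using \<open>u + v = 1\<close> by (metis distrib_right mult_1)
  finally have "(\<Sum>a\<in>A. f (D a w / c a)) \<le> \<delta>" .
  moreover have "D a w \<le> 0" if "a \<in> A" for a
    using x z that \<open>u \<ge> 0\<close> \<open>v \<ge> 0\<close> D_affine [OF that \<open>u + v = 1\<close>]
    by (auto simp: w_def intro!: add_nonpos_nonpos mult_nonneg_nonpos)
  moreover have "w \<in> S"
    using x z \<open>u \<ge> 0\<close> \<open>v \<ge> 0\<close> \<open>u + v = 1\<close> assms(1) by (simp add: convex_fam_def w_def)
  ultimately show "(\<lambda>b i. u * x b i + v * z b i)
      \<in> {e \<in> S. (\<Sum>a\<in>A. f (D a e / c a)) \<le> \<delta> \<and> (\<forall>a\<in>A. D a e \<le> 0)}"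
    by (simp add: w_def)
qed

lemma convex_fam_attack_space: "convex_fam (attack_space K m)"
  by (auto simp: convex_fam_def attack_space_def)

lemma mu_tilde_convex_combination:
  assumes "u + v = 1"
  shows "mu_tilde m y (\<lambda>a i. u * e a i + v * e' a i) a = u * mu_tilde m y e a + v * mu_tilde m y e' a"
proof -
  have v: "v = 1 - u" using assms by simp
  have "(\<Sum>i<m a. y a i + (u * e a i + v * e' a i))
      = (\<Sum>i<m a. u * (y a i + e a i) + v * (y a i + e' a i))"
    unfolding v by (simp add: algebra_simps)
  also have "\<dots> = u * (\<Sum>i<m a. y a i + e a i) + v * (\<Sum>i<m a. y a i + e' a i)"
    by (simp add: sum.distrib sum_distrib_left distrib_left)
  finally have "(\<Sum>i<m a. y a i + (u * e a i + v * e' a i))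
      = u * (\<Sum>i<m a. y a i + e a i) + v * (\<Sum>i<m a. y a i + e' a i)" .
  then show ?thesis
    unfolding mu_tilde_def by (simp add: add_divide_distrib)
qed

theorem proposition2:
  fixes K :: nat and astar :: nat and sigma delta :: real
    and m :: "nat \<Rightarrow> nat" and y :: "nat \<Rightarrow> nat \<Rightarrow> real"
  assumes "K \<ge> 2" and "astar \<in> {1..K}" and "sigma > 0" and "delta > 0"
    and "\<forall>a\<in>{1..K}. m a \<ge> 1"
  shows "convex_fam {e \<in> attack_space K m.
           (\<Sum>a\<in>{1..K} - {astar}.
              Phi ((mu_tilde m y e a - mu_tilde m y e astar) /
                   (sigma ^ 3 * sqrt (1 / real (m a) + 1 / real (m astar))))) \<le> delta
         \<and> (\<forall>a\<in>{1..K} - {astar}. mu_tilde m y e a - mu_tilde m y e astar \<le> 0)}"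
proof (rule convex_fam_sublevel_sum_nonpos
    [OF convex_fam_attack_space convex_on_Phi_nonpos])
  fix a assume "a \<in> {1..K} - {astar}"
  then have "m a \<ge> 1" "m astar \<ge> 1" using assms(2,5) by auto
  then show "sigma ^ 3 * sqrt (1 / real (m a) + 1 / real (m astar)) > 0"
    using \<open>sigma > 0\<close> by (simp add: add_pos_pos)
next
  fix a e e' and u v :: real
  assume "u + v = 1"
  then show "mu_tilde m y (\<lambda>b i. u * e b i + v * e' b i) a - mu_tilde m y (\<lambda>b i. u * e b i + v * e' b i) astar
      = u * (mu_tilde m y e a - mu_tilde m y e astar) + v * (mu_tilde m y e' a - mu_tilde m y e' astar)"
    by (simp add: mu_tilde_convex_combination algebra_simps)
qed

end
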